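(* Suppose $S,T\subseteq[r]$ and $S$ dominates $T$. Let $u,v$ be $\mathbf{ab}$-monomials, possibly empty. Then (1) $m(S)\cdot\mathbf a\cdot v$ dominates $m(T)\cdot\mathbf a\cdot v$; (2) $u\cdot\mathbf a\cdot m(S)$ dominates $u\cdot\mathbf a\cdot m(T)$; (3) $u\cdot\mathbf a\cdot m(S)\cdot\mathbf a\cdot v$ dominates $u\cdot\mathbf a\cdot m(T)\cdot\mathbf a\cdot v$.
   Context: For a permutation $\pi=a_1\cdots a_{N+1}\in S_{N+1}$, its descent set is $\{i\in[N]:a_i>a_{i+1}\}$, and $D(S)$ is the set of permutations in $S_{N+1}$ with descent set $S\subseteq[N]$. The inversion set is $I(\pi)=\{(a_i,a_j):i<j,\ a_i>a_j\}$; weak Bruhat order: $\pi\le_w\pi'$ iff $I(\pi)\subseteq I(\pi')$. For $S,T\subseteq[N]$, $S$ dominates $T$ if there is an injection $\phi:D(T)\to D(S)$ with $\pi\le_w\phi(\pi)$ for all $\pi\in D(T)$. For $S\subseteq[N]$, $m(S)=u_1\cdots u_N$ is the word in noncommuting letters $\mathbf a,\mathbf b$ with $u_i=\mathbf b$ if $i\in S$ and $u_i=\mathbf a$ otherwise; conversely a word of length $N$ determines a subset of $[N]$, and dominance between two words of the same length $N$ means dominance between the corresponding subsets of $[N]$ (permutations in $S_{N+1}$). *)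

theory Defs
  imports Main
begin

text \<open>Permutations of S_{N+1} in one-line notation: lists a_1 ... a_{N+1}
  (stored 0-indexed) that are arrangements of the values 1..N+1.\<close>

definition is_perm :: "nat \<Rightarrow> nat list \<Rightarrow> bool" where
  "is_perm n xs \<longleftrightarrow> distinct xs \<and> set xs = {1..n}"

definition descents :: "nat list \<Rightarrow> nat set" where
  "descents xs = {i. 1 \<le> i \<and> i < length xs \<and> xs ! (i - 1) > xs ! i}"

definition Dset :: "nat \<Rightarrow> nat set \<Rightarrow> nat list set" where
  "Dset N S = {xs. is_perm (N + 1) xs \<and> descents xs = S}"

definition inversions :: "nat list \<Rightarrow> (nat \<times> nat) set" where
  "inversions xs = {(xs ! i, xs ! j) | i j. i < j \<and> j < length xs \<and> xs ! i > xs ! j}"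

definition weak_le :: "nat list \<Rightarrow> nat list \<Rightarrow> bool" where
  "weak_le p q \<longleftrightarrow> inversions p \<subseteq> inversions q"

definition dominates :: "nat \<Rightarrow> nat set \<Rightarrow> nat set \<Rightarrow> bool" where
  "dominates N S T \<longleftrightarrow> (\<exists>\<phi>. inj_on \<phi> (Dset N T) \<and> \<phi> ` Dset N T \<subseteq> Dset N S \<and>
      (\<forall>\<pi>\<in>Dset N T. weak_le \<pi> (\<phi> \<pi>)))"

datatype letter = a | b

type_synonym word = "letter list"

definition mword :: "nat \<Rightarrow> nat set \<Rightarrow> word" where
  "mword N S = map (\<lambda>i. if i \<in> S then b else a) [1..<N + 1]"

definition word_set :: "word \<Rightarrow> nat set" where
  "word_set w = {i. 1 \<le> i \<and> i \<le> length w \<and> w ! (i - 1) = b}"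

definition word_dominates :: "word \<Rightarrow> word \<Rightarrow> bool" where
  "word_dominates w1 w2 \<longleftrightarrow> length w1 = length w2 \<and>
     dominates (length w1) (word_set w1) (word_set w2)"

end

theory Submission
  imports Defs "HOL-Library.Infinite_Set"
begin

text \<open>A permutation whose descent word is x w2 y splits as Q P R, where the window P
  consists of the length w2 + 1 entries whose internal descents are recorded by w2.
  Standardising P, applying the dominance injection and relabelling with the original values
  replaces P by a P' with the same entries, descent word w1 and more inversions; inversions
  between P and Q, R only depend on the entries, so the whole permutation goes up in weak order.
  The descents at the two ends of the window are ascents because the adjacent letters are a, and
  going up in weak order can only raise the first and lower the last entry of the window, so
  these ascents survive.\<close>

fun descent_word :: "nat list \<Rightarrow> word" where
  "descent_word (p # q # xs) = (if q < p then b else a) # descent_word (q # xs)"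
| "descent_word _ = []"

lemma length_descent_word [simp]: "length (descent_word xs) = length xs - 1"
  by (induction xs rule: descent_word.induct) auto

lemma nth_descent_word:
  "i < length xs - 1 \<Longrightarrow> descent_word xs ! i = (if xs ! Suc i < xs ! i then b else a)"
  by (induction xs arbitrary: i rule: descent_word.induct) (auto simp: nth_Cons split: nat.split)

lemma descents_eq_word_set: "descents xs = word_set (descent_word xs)"
  by (auto simp: descents_def word_set_def nth_descent_word split: if_splits)

lemma word_set_eq_iff: "length v = length w \<Longrightarrow> word_set v = word_set w \<longleftrightarrow> v = w"
proof
  assume len: "length v = length w" and ws: "word_set v = word_set w"
  have "v ! i = w ! i" if "i < length v" for i
    using that len ws[THEN eqset_imp_iff, of "Suc i"]
    by (cases "v ! i"; cases "w ! i") (simp_all add: word_set_def)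
  then show "v = w"
    using len by (simp add: nth_equalityI)
qed simp

lemma descent_word_append_overlap:
  "descent_word (xs @ p # ys) = descent_word (xs @ [p]) @ descent_word (p # ys)"
  by (induction xs rule: induct_list012) auto

lemma descent_word_splice:
  assumes "P \<noteq> []"
  shows "descent_word (Q @ P @ R) = descent_word (Q @ [hd P]) @ descent_word P @ descent_word (last P # R)"
proof -
  have "descent_word (P @ R) = descent_word P @ descent_word (last P # R)"
    using descent_word_append_overlap[of "butlast P" "last P" R] assms
    by (metis append_assoc append_butlast_last_id append_Cons append_Nil)
  moreover have "P = hd P # tl P" using assms by simp
  ultimately show ?thesis
    using descent_word_append_overlap[of Q "hd P" "tl P @ R"] by (metis append_Cons)
qed

lemma descent_word_snoc_mono:
  assumes "descent_word (xs @ [p]) = w" "w = [] \<or> last w = a" "p \<le> q"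
  shows "descent_word (xs @ [q]) = w"
proof (cases xs rule: rev_cases)
  case (snoc ys z)
  have "descent_word (ys @ [z, r]) = descent_word (ys @ [z]) @ [if r < z then b else a]" for r
    using descent_word_append_overlap[of ys z "[r]"] by simp
  then show ?thesis
    using assms snoc by (auto split: if_splits)
qed (use assms in simp)

lemma descent_word_Cons_antimono:
  assumes "descent_word (p # ys) = w" "w = [] \<or> hd w = a" "q \<le> p"
  shows "descent_word (q # ys) = w"
  using assms by (cases ys) (auto split: if_splits)

lemma descent_word_map:
  "strict_mono_on (set xs) f \<Longrightarrow> descent_word (map f xs) = descent_word xs"
  by (induction xs rule: descent_word.induct) (auto simp: strict_mono_on_less dest: monotone_on_subset[OF _ subset_insertI])

lemma inversions_Nil [simp]: "inversions [] = {}"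
  by (simp add: inversions_def)

lemma inversions_Cons:
  "inversions (x # xs) = {(x, q) | q. q \<in> set xs \<and> q < x} \<union> inversions xs"
proof (intro equalityI subsetI)
  fix pq assume "pq \<in> inversions (x # xs)"
  then obtain i j where "i < j" "j < Suc (length xs)" "(x # xs) ! j < (x # xs) ! i"
    "pq = ((x # xs) ! i, (x # xs) ! j)"
    by (auto simp: inversions_def)
  then show "pq \<in> {(x, q) | q. q \<in> set xs \<and> q < x} \<union> inversions xs"
    by (cases i; cases j) (auto simp: inversions_def)
next
  fix pq assume "pq \<in> {(x, q) | q. q \<in> set xs \<and> q < x} \<union> inversions xs"
  then show "pq \<in> inversions (x # xs)"
  proof
    assume "pq \<in> {(x, q) | q. q \<in> set xs \<and> q < x}"
    then obtain j where "j < length xs" "xs ! j < x" "pq = (x, xs ! j)"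
      by (auto simp: in_set_conv_nth)
    then show ?thesis
      unfolding inversions_def by (intro CollectI exI[of _ 0] exI[of _ "Suc j"]) simp
  next
    assume "pq \<in> inversions xs"
    then obtain i j where "i < j" "j < length xs" "xs ! j < xs ! i" "pq = (xs ! i, xs ! j)"
      by (auto simp: inversions_def)
    then show ?thesis
      unfolding inversions_def by (intro CollectI exI[of _ "Suc i"] exI[of _ "Suc j"]) simp
  qed
qed

lemma inversions_subset: "inversions xs \<subseteq> set xs \<times> set xs"
  by (induction xs) (auto simp: inversions_Cons)

lemma inversions_append:
  "inversions (xs @ ys) =
     inversions xs \<union> inversions ys \<union> {(p, q). p \<in> set xs \<and> q \<in> set ys \<and> q < p}"
  by (induction xs) (auto simp: inversions_Cons)

lemma inversions_map:
  "strict_mono_on (set xs) f \<Longrightarrow> inversions (map f xs) = map_prod f f ` inversions xs"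
proof (induction xs)
  case (Cons x xs)
  then have "inversions (map f xs) = map_prod f f ` inversions xs"
    by (metis list.set(2) monotone_on_subset subset_insertI)
  moreover have "{(f x, q) | q. q \<in> f ` set xs \<and> q < f x} =
      map_prod f f ` {(x, q) | q. q \<in> set xs \<and> q < x}"
    using Cons.prems by (auto simp: strict_mono_on_less)
  ultimately show ?case
    by (simp add: inversions_Cons image_Un)
qed simp

lemma weak_le_map:
  assumes "weak_le xs ys" "strict_mono_on (set xs \<union> set ys) f"
  shows "weak_le (map f xs) (map f ys)"
proof -
  have "strict_mono_on (set xs) f" "strict_mono_on (set ys) f"
    using assms(2) by (auto intro: monotone_on_subset)
  then show ?thesis
    using assms(1) by (simp add: weak_le_def inversions_map image_mono)
qed

lemma weak_le_splice:
  "weak_le P P' \<Longrightarrow> set P = set P' \<Longrightarrow> weak_le (Q @ P @ R) (Q @ P' @ R)"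
  by (auto simp: weak_le_def inversions_append)

lemma weak_le_hd:
  assumes "weak_le \<sigma> \<tau>" "distinct \<tau>" "set \<sigma> = set \<tau>" "\<sigma> \<noteq> []"
  shows "hd \<sigma> \<le> hd \<tau>"
proof (rule ccontr)
  assume less: "\<not> hd \<sigma> \<le> hd \<tau>"
  obtain s \<sigma>' t \<tau>' where \<sigma>: "\<sigma> = s # \<sigma>'" and \<tau>: "\<tau> = t # \<tau>'"
    using assms(3,4) by (cases \<sigma>; cases \<tau>) auto
  have "t \<in> set \<sigma>'" using assms(3) less \<sigma> \<tau> by auto
  then have "(s, t) \<in> inversions \<sigma>"
    using less \<sigma> \<tau> by (simp add: inversions_Cons)
  then have "(s, t) \<in> inversions \<tau>"
    using assms(1) by (auto simp: weak_le_def)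
  then show False
    using assms(2) less \<tau> inversions_subset[of \<tau>'] by (auto simp: inversions_Cons)
qed

lemma weak_le_last:
  assumes "weak_le \<sigma> \<tau>" "distinct \<tau>" "set \<sigma> = set \<tau>" "\<sigma> \<noteq> []"
  shows "last \<tau> \<le> last \<sigma>"
proof (rule ccontr)
  assume less: "\<not> last \<tau> \<le> last \<sigma>"
  obtain s \<sigma>' t \<tau>' where \<sigma>: "\<sigma> = \<sigma>' @ [s]" and \<tau>: "\<tau> = \<tau>' @ [t]"
    using assms(3,4) by (cases \<sigma> rule: rev_cases; cases \<tau> rule: rev_cases) auto
  have "t \<in> set \<sigma>'" using assms(3) less \<sigma> \<tau> by auto
  then have "(t, s) \<in> inversions \<sigma>"
    using less \<sigma> \<tau> by (simp add: inversions_append)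
  then have "(t, s) \<in> inversions \<tau>"
    using assms(1) by (auto simp: weak_le_def)
  then show False
    using assms(2) less \<sigma> \<tau> inversions_subset[of \<tau>'] by (auto simp: inversions_append inversions_Cons)
qed

definition descent_class :: "word \<Rightarrow> nat list set" where
  "descent_class w = {P. distinct P \<and> length P = Suc (length w) \<and> descent_word P = w}"

lemma Dset_word_set:
  "Dset (length w) (word_set w) = {\<pi> \<in> descent_class w. set \<pi> = {1..Suc (length w)}}"
proof -
  have "length \<pi> = Suc (length w)" if "distinct \<pi>" "set \<pi> = {1..Suc (length w)}" for \<pi>
    using that distinct_card by fastforce
  then show ?thesis
    by (auto simp: Dset_def is_perm_def descent_class_def descents_eq_word_set word_set_eq_iff)
qed

(* The i-th smallest element of A, counting from i = 1 (enumerate counts from 0). *)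
definition ith_least :: "nat set \<Rightarrow> nat \<Rightarrow> nat" where
  "ith_least A i = enumerate A (i - 1)"

lemma bij_betw_ith_least: "finite A \<Longrightarrow> bij_betw (ith_least A) {1..card A} A"
proof -
  assume "finite A"
  have "bij_betw (\<lambda>i. i - 1) {1..card A} {..<card A}"
    by (rule bij_betw_byWitness[where f' = Suc]) auto
  from bij_betw_trans[OF this finite_bij_enumerate[OF \<open>finite A\<close>]] show ?thesis
    unfolding ith_least_def[abs_def] comp_def .
qed

lemma strict_mono_on_ith_least: "finite A \<Longrightarrow> strict_mono_on {1..card A} (ith_least A)"
  by (auto simp: strict_mono_on_def ith_least_def intro!: finite_enumerate_mono)

lemma strict_mono_on_inv_into:
  fixes f :: "'a::linorder \<Rightarrow> 'b::linorder"
  assumes bij: "bij_betw f I A" and mono: "strict_mono_on I f"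
  shows "strict_mono_on A (inv_into I f)"
proof (rule strict_mono_onI)
  fix x y assume "x \<in> A" "y \<in> A" "x < y"
  then have "inv_into I f x \<in> I" "inv_into I f y \<in> I"
    and "f (inv_into I f x) < f (inv_into I f y)"
    using bij by (auto simp: bij_betw_inv_into_right bij_betw_imp_surj_on inv_into_into)
  then show "inv_into I f x < inv_into I f y"
    using strict_mono_on_less[OF mono] by blast
qed

definition standardize :: "nat list \<Rightarrow> nat list" where
  "standardize P = map (inv_into {1..card (set P)} (ith_least (set P))) P"

lemma map_ith_least_standardize: "map (ith_least (set P)) (standardize P) = P"
proof -
  have "ith_least (set P) (inv_into {1..card (set P)} (ith_least (set P)) p) = p" if "p \<in> set P" for p
    using bij_betw_inv_into_right[OF bij_betw_ith_least that] by simp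
  then show ?thesis
    by (simp add: standardize_def map_idI)
qed

lemma standardize_Dset:
  assumes P: "P \<in> descent_class w"
  shows "standardize P \<in> Dset (length w) (word_set w)"
proof -
  let ?I = "{1..card (set P)}"
  let ?g = "inv_into ?I (ith_least (set P))"
  have bij: "bij_betw ?g (set P) ?I"
    by (rule bij_betw_inv_into, rule bij_betw_ith_least) simp
  have mono: "strict_mono_on (set P) ?g"
    by (rule strict_mono_on_inv_into, rule bij_betw_ith_least, simp, rule strict_mono_on_ith_least) simp
  have card: "card (set P) = Suc (length w)"
    using P by (simp add: descent_class_def distinct_card)
  have "standardize P \<in> descent_class w"
    using P bij mono
    by (simp add: standardize_def descent_class_def distinct_map descent_word_map bij_betw_imp_inj_on)
  moreover have "set (standardize P) = {1..Suc (length w)}"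
    using bij card by (simp add: standardize_def bij_betw_imp_surj_on)
  ultimately show ?thesis
    by (simp add: Dset_word_set)
qed

definition relabel :: "(nat list \<Rightarrow> nat list) \<Rightarrow> nat list \<Rightarrow> nat list" where
  "relabel \<phi> P = map (ith_least (set P)) (\<phi> (standardize P))"

lemma relabel_in_descent_class:
  assumes into: "\<phi> ` Dset (length w2) (word_set w2) \<subseteq> Dset (length w1) (word_set w1)"
    and le: "\<forall>\<pi> \<in> Dset (length w2) (word_set w2). weak_le \<pi> (\<phi> \<pi>)"
    and len: "length w1 = length w2"
    and P: "P \<in> descent_class w2"
  shows "relabel \<phi> P \<in> descent_class w1 \<and> set (relabel \<phi> P) = set P \<and> weak_le P (relabel \<phi> P)"
proof -
  let ?f = "ith_least (set P)" and ?I = "{1..card (set P)}"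
  let ?\<sigma> = "standardize P" and ?\<tau> = "\<phi> (standardize P)"
  have card: "card (set P) = Suc (length w1)"
    using P len by (simp add: descent_class_def distinct_card)
  have \<sigma>: "?\<sigma> \<in> Dset (length w2) (word_set w2)"
    using P by (rule standardize_Dset)
  then have "?\<tau> \<in> Dset (length w1) (word_set w1)"
    using into by blast
  then have \<tau>: "?\<tau> \<in> descent_class w1" "set ?\<tau> = ?I"
    using card by (simp_all add: Dset_word_set)
  have bij: "bij_betw ?f ?I (set P)" and mono: "strict_mono_on ?I ?f"
    using bij_betw_ith_least[of "set P"] strict_mono_on_ith_least[of "set P"] by simp_all
  have "map ?f ?\<tau> \<in> descent_class w1"
    using \<tau> bij mono
    by (simp add: descent_class_def distinct_map descent_word_map bij_betw_imp_inj_on)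
  moreover have "set (map ?f ?\<tau>) = set P"
    using \<tau>(2) bij by (simp add: bij_betw_imp_surj_on)
  moreover have "set ?\<sigma> = ?I"
    using \<sigma> card len by (simp add: Dset_word_set)
  then have "weak_le (map ?f ?\<sigma>) (map ?f ?\<tau>)"
    using \<sigma> \<tau>(2) le mono by (intro weak_le_map) simp_all
  ultimately show ?thesis
    by (simp add: relabel_def map_ith_least_standardize)
qed

lemma inj_on_relabel:
  assumes inj: "inj_on \<phi> (Dset (length w2) (word_set w2))"
    and into: "\<phi> ` Dset (length w2) (word_set w2) \<subseteq> Dset (length w1) (word_set w1)"
    and len: "length w1 = length w2"
  shows "inj_on (relabel \<phi>) (descent_class w2)"
proof (rule inj_onI)
  fix P1 P2 assume P: "P1 \<in> descent_class w2" "P2 \<in> descent_class w2"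
    and eq: "relabel \<phi> P1 = relabel \<phi> P2"
  have \<tau>: "set (\<phi> (standardize P)) = {1..card (set P)}" if "P \<in> descent_class w2" for P
  proof -
    have "\<phi> (standardize P) \<in> Dset (length w1) (word_set w1)"
      using into standardize_Dset[OF that] by blast
    then have "set (\<phi> (standardize P)) = {1..Suc (length w1)}"
      by (simp add: Dset_word_set)
    then show ?thesis
      using that len by (simp add: descent_class_def distinct_card)
  qed
  have set_relabel: "set (relabel \<phi> P) = set P" if "P \<in> descent_class w2" for P
    using \<tau>[OF that] bij_betw_ith_least[of "set P"] by (simp add: relabel_def bij_betw_def)
  have A: "set P1 = set P2"
    using set_relabel[OF P(1)] set_relabel[OF P(2)] eq by simp
  have "inj_on (ith_least (set P1)) (set (\<phi> (standardize P1)) \<union> set (\<phi> (standardize P2)))"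
    using \<tau>[OF P(1)] \<tau>[OF P(2)] A bij_betw_ith_least[of "set P1"] by (simp add: bij_betw_def)
  then have "\<phi> (standardize P1) = \<phi> (standardize P2)"
    using eq A by (simp add: relabel_def map_inj_on)
  then have "standardize P1 = standardize P2"
    using inj P standardize_Dset by (metis inj_onD)
  then show "P1 = P2"
    using A map_ith_least_standardize by metis
qed

lemma word_dominates_relabel:
  assumes "word_dominates w1 w2"
  obtains \<psi> where "inj_on \<psi> (descent_class w2)"
    and "\<And>P. P \<in> descent_class w2 \<Longrightarrow>
           \<psi> P \<in> descent_class w1 \<and> set (\<psi> P) = set P \<and> weak_le P (\<psi> P)"
proof -
  obtain \<phi> where inj: "inj_on \<phi> (Dset (length w2) (word_set w2))"
    and into: "\<phi> ` Dset (length w2) (word_set w2) \<subseteq> Dset (length w1) (word_set w1)"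
    and le: "\<forall>\<pi> \<in> Dset (length w2) (word_set w2). weak_le \<pi> (\<phi> \<pi>)"
    and len: "length w1 = length w2"
    using assms by (auto simp: word_dominates_def dominates_def)
  show ?thesis
  proof (rule that)
    show "inj_on (relabel \<phi>) (descent_class w2)"
      using inj into len by (rule inj_on_relabel)
    show "relabel \<phi> P \<in> descent_class w1 \<and> set (relabel \<phi> P) = set P \<and> weak_le P (relabel \<phi> P)"
      if "P \<in> descent_class w2" for P
      using into le len that by (rule relabel_in_descent_class)
  qed
qed

lemma descent_class_splice_iff:
  assumes "length Q = length x" "length P = Suc (length w)"
  shows "Q @ P @ R \<in> descent_class (x @ w @ y) \<longleftrightarrow>
    distinct (Q @ P @ R) \<and> P \<in> descent_class w \<and>
    descent_word (Q @ [hd P]) = x \<and> descent_word (last P # R) = y"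
proof -
  have "P \<noteq> []" using assms(2) by auto
  then show ?thesis
    using assms by (auto simp: descent_class_def descent_word_splice)
qed

lemma descent_class_replace_window:
  assumes QPR: "Q @ P @ R \<in> descent_class (x @ w2 @ y)"
    and len: "length Q = length x" "length P = Suc (length w2)"
    and x: "x = [] \<or> last x = a" and y: "y = [] \<or> hd y = a"
    and P': "P' \<in> descent_class w1" "set P' = set P" "weak_le P P'"
  shows "Q @ P' @ R \<in> descent_class (x @ w1 @ y)"
proof -
  have split: "distinct (Q @ P @ R)" "descent_word (Q @ [hd P]) = x" "descent_word (last P # R) = y"
    using QPR len by (simp_all add: descent_class_splice_iff)
  have "distinct P'" "P \<noteq> []" using P'(1) len(2) by (auto simp: descent_class_def)
  then have "hd P \<le> hd P'" "last P' \<le> last P"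
    using P'(2,3) weak_le_hd weak_le_last by simp_all
  then have "descent_word (Q @ [hd P']) = x" "descent_word (last P' # R) = y"
    using split x y descent_word_snoc_mono descent_word_Cons_antimono by blast+
  moreover have "distinct (Q @ P' @ R)"
    using split(1) P' by (auto simp: descent_class_def)
  moreover have "length P' = Suc (length w1)"
    using P'(1) by (simp add: descent_class_def)
  ultimately show ?thesis
    using P'(1) len(1) by (simp add: descent_class_splice_iff)
qed

lemma inj_on_replace_window:
  assumes inj: "inj_on \<psi> B"
    and window: "\<And>\<pi>. \<pi> \<in> X \<Longrightarrow>
      k \<le> length \<pi> \<and> take n (drop k \<pi>) \<in> B \<and> length (\<psi> (take n (drop k \<pi>))) = n"
  shows "inj_on (\<lambda>\<pi>. take k \<pi> @ \<psi> (take n (drop k \<pi>)) @ drop (k + n) \<pi>) X"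
proof (rule inj_onI)
  fix \<pi>1 \<pi>2 assume \<pi>: "\<pi>1 \<in> X" "\<pi>2 \<in> X"
    and eq: "take k \<pi>1 @ \<psi> (take n (drop k \<pi>1)) @ drop (k + n) \<pi>1 =
             take k \<pi>2 @ \<psi> (take n (drop k \<pi>2)) @ drop (k + n) \<pi>2"
  have parts: "take k \<pi>1 = take k \<pi>2" "\<psi> (take n (drop k \<pi>1)) = \<psi> (take n (drop k \<pi>2))"
      "drop (k + n) \<pi>1 = drop (k + n) \<pi>2"
    using eq window[OF \<pi>(1)] window[OF \<pi>(2)] by simp_all
  then have "take n (drop k \<pi>1) = take n (drop k \<pi>2)"
    using inj window \<pi> by (meson inj_onD)
  with parts show "\<pi>1 = \<pi>2"
    by (metis append_take_drop_id drop_drop add.commute)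
qed

lemma word_dominates_extend:
  assumes dom: "word_dominates w1 w2" and x: "x = [] \<or> last x = a" and y: "y = [] \<or> hd y = a"
  shows "word_dominates (x @ w1 @ y) (x @ w2 @ y)"
proof -
  obtain \<psi> where inj: "inj_on \<psi> (descent_class w2)"
    and \<psi>: "\<And>P. P \<in> descent_class w2 \<Longrightarrow>
             \<psi> P \<in> descent_class w1 \<and> set (\<psi> P) = set P \<and> weak_le P (\<psi> P)"
    using word_dominates_relabel[OF dom] by blast
  have len: "length w1 = length w2"
    using dom by (simp add: word_dominates_def)
  let ?D = "\<lambda>w. Dset (length w) (word_set w)" and ?k = "length x" and ?n = "Suc (length w2)"
  define P where "P \<pi> = take ?n (drop ?k \<pi>)" for \<pi> :: "nat list"
  define \<Phi> where "\<Phi> \<pi> = take ?k \<pi> @ \<psi> (P \<pi>) @ drop (?k + ?n) \<pi>" for \<pi>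
  have window: "\<pi> = take ?k \<pi> @ P \<pi> @ drop (?k + ?n) \<pi>" for \<pi>
    unfolding P_def by (metis append_take_drop_id drop_drop add.commute)
  have \<Phi>: "?k \<le> length \<pi> \<and> P \<pi> \<in> descent_class w2 \<and> length (\<psi> (P \<pi>)) = ?n \<and>
      \<Phi> \<pi> \<in> ?D (x @ w1 @ y) \<and> weak_le \<pi> (\<Phi> \<pi>)"
    if \<pi>: "\<pi> \<in> ?D (x @ w2 @ y)" for \<pi>
  proof -
    have "\<pi> \<in> descent_class (x @ w2 @ y)" and set: "set \<pi> = {1..Suc (length (x @ w2 @ y))}"
      using \<pi> unfolding Dset_word_set by simp_all
    then have cls: "take ?k \<pi> @ P \<pi> @ drop (?k + ?n) \<pi> \<in> descent_class (x @ w2 @ y)"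
      using window[of \<pi>] by metis
    have lens: "length (take ?k \<pi>) = ?k" "length (P \<pi>) = ?n"
      using \<open>\<pi> \<in> descent_class (x @ w2 @ y)\<close> by (auto simp: descent_class_def P_def)
    then have P: "P \<pi> \<in> descent_class w2"
      using cls descent_class_splice_iff by blast
    then have \<psi>P: "\<psi> (P \<pi>) \<in> descent_class w1" "set (\<psi> (P \<pi>)) = set (P \<pi>)"
        "weak_le (P \<pi>) (\<psi> (P \<pi>))"
      using \<psi> by blast+
    have "\<Phi> \<pi> \<in> descent_class (x @ w1 @ y)"
      unfolding \<Phi>_def using descent_class_replace_window[OF cls lens x y \<psi>P] .
    moreover have "set (\<Phi> \<pi>) = set \<pi>"
      using \<psi>P(2) window[of \<pi>] unfolding \<Phi>_def by (metis set_append)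
    moreover have "weak_le \<pi> (\<Phi> \<pi>)"
      using weak_le_splice[OF \<psi>P(3) \<psi>P(2)[symmetric]] window[of \<pi>] unfolding \<Phi>_def by metis
    moreover have "length (\<psi> (P \<pi>)) = ?n"
      using \<psi>P(1) len by (simp add: descent_class_def)
    ultimately show ?thesis
      using lens P set len unfolding Dset_word_set by simp
  qed
  have "inj_on \<Phi> (?D (x @ w2 @ y))"
    using inj_on_replace_window[OF inj, of "?D (x @ w2 @ y)" ?k ?n] \<Phi>
    unfolding \<Phi>_def P_def by blast
  moreover have "\<Phi> ` ?D (x @ w2 @ y) \<subseteq> ?D (x @ w1 @ y)" "\<forall>\<pi> \<in> ?D (x @ w2 @ y). weak_le \<pi> (\<Phi> \<pi>)"
    using \<Phi> by blast+
  moreover have "length (x @ w1 @ y) = length (x @ w2 @ y)"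
    using len by simp
  ultimately show ?thesis
    unfolding word_dominates_def dominates_def by metis
qed

lemma length_mword [simp]: "length (mword r S) = r"
  by (simp add: mword_def)

lemma word_set_mword:
  assumes "S \<subseteq> {1..r}"
  shows "word_set (mword r S) = S"
proof -
  have "mword r S ! (i - 1) = (if i \<in> S then b else a)" if "1 \<le> i" "i \<le> r" for i
    using that by (simp add: mword_def nth_map_upt del: upt_Suc)
  then show ?thesis
    using assms by (auto simp: word_set_def split: if_splits)
qed

theorem proposition5p3:
  fixes r :: nat and S T :: "nat set" and u v :: word
  assumes "S \<subseteq> {1..r}" and "T \<subseteq> {1..r}"
    and "dominates r S T"
  shows "word_dominates (mword r S @ [a] @ v) (mword r T @ [a] @ v) \<and>
         word_dominates (u @ [a] @ mword r S) (u @ [a] @ mword r T) \<and>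
         word_dominates (u @ [a] @ mword r S @ [a] @ v) (u @ [a] @ mword r T @ [a] @ v)"
proof -
  have ST: "word_dominates (mword r S) (mword r T)"
    using assms by (simp add: word_dominates_def word_set_mword)
  have "word_dominates ([] @ mword r S @ [a] @ v) ([] @ mword r T @ [a] @ v)"
    and "word_dominates ((u @ [a]) @ mword r S @ []) ((u @ [a]) @ mword r T @ [])"
    and "word_dominates ((u @ [a]) @ mword r S @ [a] @ v) ((u @ [a]) @ mword r T @ [a] @ v)"
    by (rule word_dominates_extend[OF ST]; simp)+
  then show ?thesis
    by simp
qed

end
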